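(* Let $\mathbb{k}$ be a field of characteristic $0$, $\mathfrak{M}$ a monomial group, and $(\epsilon_i)_{i\in I}$ a family in $\mathbb{k}[[\mathfrak{M}]]^{\prec1}$. Then $(\epsilon_i)$ is summable if and only if $(\log(1+\epsilon_i))_{i\in I}$ is summable.
   Context: A monomial group is a (multiplicatively written) totally ordered abelian group $\mathfrak{M}$, with order written $\prec$. A subset of $\mathfrak{M}$ is well-based if it has no infinite strictly increasing sequence. $\mathbb{k}[[\mathfrak{M}]]$ is the Hahn field of formal series $f=\sum_{\mathfrak{m}}f_{\mathfrak{m}}\mathfrak{m}$ ($f_{\mathfrak{m}}\in\mathbb{k}$) with well-based support $\operatorname{supp}f=\{\mathfrak{m}:f_{\mathfrak{m}}\neq0\}$. $\mathbb{k}[[\mathfrak{M}]]^{\prec1}$ is the set of $f$ with $\operatorname{supp} f\subseteq\{\mathfrak{m}:\mathfrak{m}\prec1\}$. A family $(f_i)_{i\in I}$ ($I$ a set) is summable if $\bigcup_i\operatorname{supp}f_i$ is well-based and each $\mathfrak{m}$ lies in $\operatorname{supp}f_i$ for only finitely many $i$; its sum is taken coefficientwise. For $\epsilon\in\mathbb{k}[[\mathfrak{M}]]^{\prec1}$, $\log(1+\epsilon)=\sum_{j\ge1}(-1)^{j-1}\epsilon^j/j$ (this sum exists). *)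

theory Defs
  imports Main
begin

text \<open>Monomial group: a totally ordered abelian group, written additively
  (type class linordered_ab_group_add); the monomial 1 is 0, monomial product is +,
  and m \<prec> 1 reads m < 0.  Series over a field 'k are coefficient functions 'm \<Rightarrow> 'k.\<close>

definition well_based :: "'m::linorder set \<Rightarrow> bool" where
  "well_based S \<longleftrightarrow> \<not> (\<exists>f::nat \<Rightarrow> 'm. (\<forall>n. f n \<in> S) \<and> strict_mono f)"

definition supp :: "('m \<Rightarrow> 'k::zero) \<Rightarrow> 'm set" where
  "supp f = {m. f m \<noteq> 0}"

definition hahn :: "('m::linorder \<Rightarrow> 'k::zero) \<Rightarrow> bool" where
  "hahn f \<longleftrightarrow> well_based (supp f)"

definition infinitesimal :: "('m::linordered_ab_group_add \<Rightarrow> 'k::zero) \<Rightarrow> bool" where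
  "infinitesimal f \<longleftrightarrow> hahn f \<and> supp f \<subseteq> {m. m < 0}"

definition hone :: "'m::linordered_ab_group_add \<Rightarrow> 'k::field" where
  "hone m = (if m = 0 then 1 else 0)"

definition hmult :: "('m::linordered_ab_group_add \<Rightarrow> 'k::field) \<Rightarrow> ('m \<Rightarrow> 'k) \<Rightarrow> 'm \<Rightarrow> 'k" where
  "hmult f g m = (\<Sum>p\<in>{(a, b). a \<in> supp f \<and> b \<in> supp g \<and> a + b = m}. f (fst p) * g (snd p))"

fun hpow :: "('m::linordered_ab_group_add \<Rightarrow> 'k::field) \<Rightarrow> nat \<Rightarrow> 'm \<Rightarrow> 'k" where
  "hpow f 0 = hone"
| "hpow f (Suc n) = hmult f (hpow f n)"

definition hsummable :: "'i set \<Rightarrow> ('i \<Rightarrow> 'm::linorder \<Rightarrow> 'k::zero) \<Rightarrow> bool" where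
  "hsummable I F \<longleftrightarrow> well_based (\<Union>i\<in>I. supp (F i)) \<and> (\<forall>m. finite {i\<in>I. m \<in> supp (F i)})"

definition hsum :: "'i set \<Rightarrow> ('i \<Rightarrow> 'm \<Rightarrow> 'k::comm_monoid_add) \<Rightarrow> 'm \<Rightarrow> 'k" where
  "hsum I F m = (\<Sum>i\<in>{i\<in>I. F i m \<noteq> 0}. F i m)"

definition hlog1p :: "('m::linordered_ab_group_add \<Rightarrow> 'k::field_char_0) \<Rightarrow> 'm \<Rightarrow> 'k" where
  "hlog1p eps = hsum {1..} (\<lambda>j m. (-1) ^ (j - 1) * hpow eps j m / of_nat j)"

end

theory Submission
  imports Defs "HOL-Library.Multiset" Complex_Main
begin

(* Every exponent of log(1 + eps) is a finite sum of exponents of eps, as it comes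
   from some power eps^j.  Conversely every exponent m of eps is a finite sum of exponents of
   log(1 + eps): by well-founded induction downwards, if m is not itself an exponent of log(1 + eps),
   the j = 1 term eps_m must cancel against some eps^j with j >= 2, which writes m as a sum of at least
   two, hence strictly larger, exponents of eps.

   Summability transfers along these inclusions by Neumann's lemma: for a well-based set U of
   negative elements, the finite sums of elements of U form a well-based set, and each element has
   only finitely many representations as such a sum.  Both halves say that no sequence of multisets
   over U has weakly increasing sums and pairwise distinct terms, which is proved by Nash-Williams'
   minimal bad sequence argument. *)

lemma well_based_iff_wfp_on: "well_based S \<longleftrightarrow> wfp_on S (>)"
proof -
  have "(\<exists>f::nat \<Rightarrow> _. (\<forall>n. f n \<in> S) \<and> strict_mono f) \<longleftrightarrow>
      (\<exists>f. \<forall>i. (f (Suc i), f i) \<in> {(x, y). y < x \<and> x \<in> S \<and> y \<in> S})"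
    unfolding strict_mono_Suc_iff by (intro ex_cong1) auto
  \<comment> \<open>Instantiated, since \<open>wfp\<close> abbreviates \<open>wfp_on UNIV\<close> and unfolding would loop.\<close>
  then show ?thesis
    unfolding well_based_def wfp_on_iff_wfp[of S] wfp_def wf_iff_no_infinite_down_chain by blast
qed

lemma well_based_subset: "well_based S \<Longrightarrow> T \<subseteq> S \<Longrightarrow> well_based T"
  unfolding well_based_iff_wfp_on by (rule wfp_on_subset)

lemma well_based_has_max:
  fixes S :: "'a::linorder set"
  assumes "well_based S" and "x \<in> S"
  shows "\<exists>m\<in>S. \<forall>y\<in>S. y \<le> m"
proof -
  have "wfp_on S (>)"
    using assms(1) by (simp add: well_based_iff_wfp_on)
  then obtain m where "m \<in> S" and "\<And>y. m < y \<Longrightarrow> y \<notin> S"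
    using assms(2) unfolding wfp_on_iff_ex_minimal by blast
  then show ?thesis
    by (meson not_le)
qed

lemma well_based_decseq_subseq:
  fixes a :: "nat \<Rightarrow> 'a::linorder"
  assumes "well_based U" and "\<And>n. a n \<in> U"
  obtains \<phi> where "strict_mono \<phi>" and "decseq (a \<circ> \<phi>)"
proof -
  obtain \<phi> where \<phi>: "strict_mono \<phi>" "monoseq (a \<circ> \<phi>)"
    using seq_monosub[of a] by (auto simp: comp_def)
  show thesis
  proof (cases "decseq (a \<circ> \<phi>)")
    case True
    with \<phi>(1) show thesis by (rule that)
  next
    case False
    with \<phi>(2) have inc: "incseq (a \<circ> \<phi>)"
      by (simp add: monoseq_iff)
    have "well_based (range (a \<circ> \<phi>))"
      by (rule well_based_subset[OF assms(1)]) (auto intro: assms(2))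
    then obtain N where N: "\<And>n. a (\<phi> n) \<le> a (\<phi> N)"
      using well_based_has_max[of "range (a \<circ> \<phi>)"] by auto
    have "a (\<phi> (n + N)) = a (\<phi> N)" for n
      using N[of "n + N"] monoD[OF inc, of N "n + N"] by simp
    then have "decseq (a \<circ> (\<phi> \<circ> (\<lambda>n. n + N)))"
      by (simp add: decseq_def)
    moreover have "strict_mono (\<phi> \<circ> (\<lambda>n. n + N))"
      using \<phi>(1) by (simp add: strict_mono_def strict_mono_less)
    ultimately show thesis by (intro that) (simp_all add: comp_assoc)
  qed
qed

(* Bad in the sense of well-quasi-orders when Q is the complement of the quasi-order. *)
definition bad_seq :: "'a set \<Rightarrow> ('a \<Rightarrow> 'a \<Rightarrow> bool) \<Rightarrow> (nat \<Rightarrow> 'a) \<Rightarrow> bool" where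
  "bad_seq A Q f \<longleftrightarrow> (\<forall>n. f n \<in> A) \<and> (\<forall>i j. i < j \<longrightarrow> Q (f i) (f j))"

lemma bad_seq_if_prefixes_extend:
  assumes "\<And>n. \<exists>g. bad_seq A Q g \<and> (\<forall>i<n. g i = h i)"
  shows "bad_seq A Q h"
  unfolding bad_seq_def
proof (intro conjI allI impI)
  fix n
  obtain g where "bad_seq A Q g" "\<forall>i<Suc n. g i = h i"
    using assms by blast
  then show "h n \<in> A"
    unfolding bad_seq_def by (metis lessI)
next
  fix i j :: nat
  assume "i < j"
  obtain g where "bad_seq A Q g" "\<forall>k<Suc j. g k = h k"
    using assms by blast
  moreover from this(2) \<open>i < j\<close> have "g i = h i" "g j = h j"
    by simp_all
  ultimately show "Q (h i) (h j)"
    using \<open>i < j\<close> unfolding bad_seq_def by metis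
qed

lemma minimal_bad_seq:
  fixes \<mu> :: "'a \<Rightarrow> nat"
  assumes "bad_seq A Q f"
  obtains h where "bad_seq A Q h"
    and "\<And>g n. bad_seq A Q g \<Longrightarrow> \<forall>i<n. g i = h i \<Longrightarrow> \<mu> (h n) \<le> \<mu> (g n)"
proof -
  define extends where
    "extends p n x \<longleftrightarrow> (\<exists>g. bad_seq A Q g \<and> (\<forall>i<n. g i = p i) \<and> g n = x)" for p n x
  define least_ext where "least_ext p n = (ARG_MIN \<mu> x. extends p n x)" for p n
  \<comment> \<open>\<open>pre n\<close> fixes the first n terms of h; its values from n on are irrelevant.\<close>
  define pre where "pre = rec_nat f (\<lambda>n p. p(n := least_ext p n))"
  have pre_Suc: "pre (Suc n) = (pre n)(n := least_ext (pre n) n)" for n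
    by (simp add: pre_def)
  have pre_extendable: "\<exists>g. bad_seq A Q g \<and> (\<forall>i<n. g i = pre n i)" for n
  proof (induction n)
    case 0
    show ?case using assms by blast
  next
    case (Suc n)
    then obtain g where "bad_seq A Q g" "\<forall>i<n. g i = pre n i"
      by blast
    then have "extends (pre n) n (g n)"
      unfolding extends_def by blast
    then have "extends (pre n) n (least_ext (pre n) n)"
      unfolding least_ext_def by (rule arg_min_natI)
    then show ?case
      unfolding extends_def by (auto simp: pre_Suc less_Suc_eq)
  qed
  define h where "h i = pre (Suc i) i" for i
  have pre_h: "pre n i = h i" if "i < n" for i n
    using that by (induction n) (auto simp: h_def pre_Suc less_Suc_eq)
  have "bad_seq A Q h"
  proof (rule bad_seq_if_prefixes_extend)
    fix n
    obtain g where "bad_seq A Q g" "\<forall>i<n. g i = pre n i"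
      using pre_extendable by blast
    then show "\<exists>g. bad_seq A Q g \<and> (\<forall>i<n. g i = h i)"
      by (auto simp: pre_h)
  qed
  moreover have "\<mu> (h n) \<le> \<mu> (g n)" if "bad_seq A Q g" "\<forall>i<n. g i = h i" for g n
  proof -
    have "extends (pre n) n (g n)"
      using that unfolding extends_def by (auto simp: pre_h)
    then have "\<mu> (least_ext (pre n) n) \<le> \<mu> (g n)"
      unfolding least_ext_def by (rule arg_min_nat_le)
    then show ?thesis
      by (simp add: h_def pre_Suc)
  qed
  ultimately show thesis by (rule that)
qed

lemma sum_mset_neg:
  fixes M :: "'a::ordered_comm_monoid_add multiset"
  assumes "M \<noteq> {#}" and "\<And>x. x \<in># M \<Longrightarrow> x < 0"
  shows "sum_mset M < 0"
  using assms
proof (induction M)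
  case empty
  then show ?case by simp
next
  case (add x M)
  then have "x < 0"
    by simp
  show ?case
  proof (cases "M = {#}")
    case True
    with \<open>x < 0\<close> show ?thesis by simp
  next
    case False
    with add have "sum_mset M < 0"
      by simp
    with \<open>x < 0\<close> show ?thesis
      by (simp add: add_neg_neg)
  qed
qed

lemma sum_mset_less_member:
  fixes M :: "'a::ordered_ab_group_add multiset"
  assumes "a \<in># M" and "2 \<le> size M" and "\<And>x. x \<in># M \<Longrightarrow> x < 0"
  shows "sum_mset M < a"
proof -
  have "size (M - {#a#}) = size M - 1"
    using assms(1) by (simp add: size_Diff_singleton)
  with assms(2) have "M - {#a#} \<noteq> {#}"
    by auto
  then have "sum_mset (M - {#a#}) < 0"
    using assms(3) by (intro sum_mset_neg) (auto dest: in_diffD)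
  moreover have "sum_mset M = a + sum_mset (M - {#a#})"
    using assms(1) by (rule sum_mset.remove)
  ultimately show ?thesis
    by simp
qed

abbreviation sum_bad_seq :: "'m::ordered_comm_monoid_add set \<Rightarrow> (nat \<Rightarrow> 'm multiset) \<Rightarrow> bool" where
  "sum_bad_seq U \<equiv> bad_seq {M. set_mset M \<subseteq> U} (\<lambda>M N. sum_mset M \<le> sum_mset N \<and> M \<noteq> N)"

lemma sum_bad_seq_nonempty:
  fixes U :: "'m::ordered_comm_monoid_add set"
  assumes "U \<subseteq> {..<0}" and "sum_bad_seq U f"
  shows "f n \<noteq> {#}"
proof
  assume "f n = {#}"
  with assms(2) have "0 \<le> sum_mset (f (Suc n))" "f (Suc n) \<noteq> {#}"
    unfolding bad_seq_def by (metis lessI sum_mset.empty)+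
  moreover have "sum_mset (f (Suc n)) < 0"
    using assms calculation(2) unfolding bad_seq_def by (intro sum_mset_neg) auto
  ultimately show False by simp
qed

lemma bad_seq_subseq: "bad_seq A Q f \<Longrightarrow> strict_mono \<phi> \<Longrightarrow> bad_seq A Q (f \<circ> \<phi>)"
  unfolding bad_seq_def by (simp add: strict_mono_less)

lemma sum_bad_seq_tails:
  fixes h v :: "nat \<Rightarrow> 'm::linordered_ab_group_add multiset"
  assumes bad: "sum_bad_seq U h" and "decseq a" and h_split: "\<And>n. h n = add_mset (a n) (v n)"
  shows "sum_bad_seq U v"
  unfolding bad_seq_def
proof (rule conjI; intro allI impI)
  show "v n \<in> {M. set_mset M \<subseteq> U}" for n
    using bad unfolding bad_seq_def h_split by auto
next
  fix i j :: nat
  assume "i < j"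
  then have h_le: "a i + sum_mset (v i) \<le> a j + sum_mset (v j)" and "h i \<noteq> h j"
    using bad unfolding bad_seq_def h_split by auto
  have a_le: "a j \<le> a i"
    using \<open>decseq a\<close> \<open>i < j\<close> by (simp add: decseq_def)
  have "a j + sum_mset (v i) \<le> a j + sum_mset (v j)"
    using add_right_mono[OF a_le] h_le by (rule order.trans)
  moreover have "v i \<noteq> v j"
  proof
    assume "v i = v j"
    with h_le a_le have "a i = a j"
      by simp
    with \<open>v i = v j\<close> \<open>h i \<noteq> h j\<close> show False
      unfolding h_split by simp
  qed
  ultimately show "sum_mset (v i) \<le> sum_mset (v j) \<and> v i \<noteq> v j"
    by simp
qed

lemma sum_bad_seq_splice:
  fixes h w :: "nat \<Rightarrow> 'm::ordered_comm_monoid_add multiset"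
  assumes "sum_bad_seq U h" and "sum_bad_seq U w"
    and less: "\<And>i k. i < N \<Longrightarrow> sum_mset (h i) < sum_mset (w k)"
  shows "sum_bad_seq U (\<lambda>i. if i < N then h i else w (i - N))" (is "sum_bad_seq U ?g")
proof -
  have "sum_mset (?g i) \<le> sum_mset (?g j) \<and> ?g i \<noteq> ?g j" if "i < j" for i j
  proof -
    consider "j < N" | "i < N" "N \<le> j" | "N \<le> i"
      using \<open>i < j\<close> by linarith
    then show ?thesis
    proof cases
      case 1
      with assms(1) \<open>i < j\<close> show ?thesis
        by (simp add: bad_seq_def)
    next
      case 2
      with less[of i "j - N"] show ?thesis
        by auto
    next
      case 3
      with assms(2) \<open>i < j\<close> show ?thesis
        by (simp add: bad_seq_def)
    qed
  qed
  with assms(1,2) show ?thesis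
    by (simp add: bad_seq_def)
qed

theorem no_sum_bad_seq:
  fixes U :: "'m::linordered_ab_group_add set"
  assumes wb: "well_based U" and neg: "U \<subseteq> {..<0}"
  shows "\<not> sum_bad_seq U f"
proof
  assume "sum_bad_seq U f"
  then obtain h where bad: "sum_bad_seq U h"
    and minimal: "\<And>g n. sum_bad_seq U g \<Longrightarrow> \<forall>i<n. g i = h i \<Longrightarrow> size (h n) \<le> size (g n)"
    by (rule minimal_bad_seq[where \<mu> = size]) blast
  define a where "a n = Max (set_mset (h n))" for n
  define v where "v n = h n - {#a n#}" for n
  have "a n \<in># h n" for n
    using sum_bad_seq_nonempty[OF neg bad, of n] by (simp add: a_def)
  then have h_split: "h n = add_mset (a n) (v n)" for n
    by (simp add: v_def)
  have aU: "a n \<in> U" for n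
    using bad unfolding bad_seq_def h_split by auto
  obtain \<phi> where \<phi>: "strict_mono \<phi>" and "decseq (a \<circ> \<phi>)"
    using well_based_decseq_subseq[OF wb aU] .
  have tails: "sum_bad_seq U (v \<circ> \<phi>)"
    using bad_seq_subseq[OF bad \<phi>] \<open>decseq (a \<circ> \<phi>)\<close> by (rule sum_bad_seq_tails) (simp add: h_split)
  have "sum_mset (h i) < sum_mset ((v \<circ> \<phi>) k)" if "i < \<phi> 0" for i k
  proof -
    have "\<phi> 0 \<le> \<phi> k"
      using \<phi> by (simp add: strict_mono_less_eq)
    with that have "sum_mset (h i) \<le> sum_mset (h (\<phi> k))"
      using bad by (simp add: bad_seq_def)
    also have "\<dots> = a (\<phi> k) + sum_mset (v (\<phi> k))"
      by (subst h_split) simp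
    also have "\<dots> < sum_mset (v (\<phi> k))"
      using aU[of "\<phi> k"] neg by auto
    finally show ?thesis
      by simp
  qed
  \<comment> \<open>Replacing h from \<open>\<phi> 0\<close> on by the tails v along \<open>\<phi>\<close> contradicts the minimality of h.\<close>
  with bad tails have "sum_bad_seq U (\<lambda>i. if i < \<phi> 0 then h i else (v \<circ> \<phi>) (i - \<phi> 0))"
    by (rule sum_bad_seq_splice)
  from minimal[OF this, of "\<phi> 0"] have "size (h (\<phi> 0)) \<le> size (v (\<phi> 0))"
    by simp
  then show False
    by (simp add: h_split[of "\<phi> 0"])
qed

definition finite_sums :: "'m::comm_monoid_add set \<Rightarrow> 'm set" where
  "finite_sums U = sum_mset ` {M. M \<noteq> {#} \<and> set_mset M \<subseteq> U}"

lemma finite_sumsI: "M \<noteq> {#} \<Longrightarrow> set_mset M \<subseteq> S \<Longrightarrow> sum_mset M \<in> finite_sums S"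
  unfolding finite_sums_def by blast

lemma finite_sumsE:
  assumes "x \<in> finite_sums S"
  obtains M where "M \<noteq> {#}" and "set_mset M \<subseteq> S" and "x = sum_mset M"
  using assms unfolding finite_sums_def by auto

theorem well_based_finite_sums:
  fixes U :: "'m::linordered_ab_group_add set"
  assumes "well_based U" and "U \<subseteq> {..<0}"
  shows "well_based (finite_sums U)"
  unfolding well_based_def
proof
  assume "\<exists>x :: nat \<Rightarrow> 'm. (\<forall>n. x n \<in> finite_sums U) \<and> strict_mono x"
  then obtain x :: "nat \<Rightarrow> 'm" where x: "\<And>n. x n \<in> finite_sums U" and "strict_mono x"
    by blast
  have "\<exists>M. set_mset M \<subseteq> U \<and> sum_mset M = x n" for n
    using x[of n] by (rule finite_sumsE) auto
  then have "\<forall>n. \<exists>M. set_mset M \<subseteq> U \<and> sum_mset M = x n"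
    by blast
  then obtain M where "\<forall>n. set_mset (M n) \<subseteq> U \<and> sum_mset (M n) = x n"
    by (rule choice[THEN exE])
  then have M: "\<And>n. set_mset (M n) \<subseteq> U" "\<And>n. sum_mset (M n) = x n"
    by simp_all
  have "sum_bad_seq U M"
    unfolding bad_seq_def
  proof (rule conjI; intro allI impI)
    show "M n \<in> {M. set_mset M \<subseteq> U}" for n
      using M(1) by simp
  next
    fix i j :: nat
    assume "i < j"
    with \<open>strict_mono x\<close> have "sum_mset (M i) < sum_mset (M j)"
      by (simp add: M(2) strict_mono_less)
    then show "sum_mset (M i) \<le> sum_mset (M j) \<and> M i \<noteq> M j"
      by auto
  qed
  with no_sum_bad_seq[OF assms] show False by blast
qed

theorem finite_sum_representations:
  fixes U :: "'m::linordered_ab_group_add set"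
  assumes "well_based U" and "U \<subseteq> {..<0}"
  shows "finite {M. set_mset M \<subseteq> U \<and> sum_mset M = m}"
proof (rule ccontr)
  assume "infinite {M. set_mset M \<subseteq> U \<and> sum_mset M = m}"
  then obtain f :: "nat \<Rightarrow> 'm multiset"
    where "inj f" and "range f \<subseteq> {M. set_mset M \<subseteq> U \<and> sum_mset M = m}"
    by (auto simp: infinite_iff_countable_subset)
  then have "sum_bad_seq U f"
    unfolding bad_seq_def by (auto simp: image_subset_iff inj_eq)
  with no_sum_bad_seq[OF assms] show False by blast
qed

lemma finite_sums_mono: "S \<subseteq> T \<Longrightarrow> finite_sums S \<subseteq> finite_sums T"
  unfolding finite_sums_def by (rule image_mono) auto

lemma subset_finite_sums: "S \<subseteq> finite_sums S"
proof
  fix x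
  assume "x \<in> S"
  then have "sum_mset {#x#} \<in> finite_sums S"
    by (intro finite_sumsI) auto
  then show "x \<in> finite_sums S"
    by simp
qed

lemma finite_sums_add:
  assumes "x \<in> finite_sums S" and "y \<in> finite_sums S"
  shows "x + y \<in> finite_sums S"
proof -
  obtain A B where "A \<noteq> {#}" "set_mset A \<subseteq> S" "x = sum_mset A"
    and "set_mset B \<subseteq> S" "y = sum_mset B"
    using assms by (metis finite_sumsE)
  then have "sum_mset (A + B) \<in> finite_sums S"
    by (intro finite_sumsI) auto
  with \<open>x = sum_mset A\<close> \<open>y = sum_mset B\<close> show ?thesis
    by simp
qed

lemma sum_mset_in_finite_sums:
  "M \<noteq> {#} \<Longrightarrow> set_mset M \<subseteq> finite_sums S \<Longrightarrow> sum_mset M \<in> finite_sums S"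
proof (induction M)
  case empty
  then show ?case by simp
next
  case (add x M)
  then show ?case
    by (cases "M = {#}") (simp_all add: finite_sums_add)
qed

lemma finite_sums_neg:
  fixes S :: "'m::ordered_comm_monoid_add set"
  assumes "S \<subseteq> {..<0}"
  shows "finite_sums S \<subseteq> {..<0}"
proof
  fix x
  assume "x \<in> finite_sums S"
  then obtain M where "M \<noteq> {#}" "set_mset M \<subseteq> S" "x = sum_mset M"
    by (rule finite_sumsE)
  with assms show "x \<in> {..<0}"
    using sum_mset_neg[of M] by auto
qed

lemma supp_hmult: "supp (hmult f g) \<subseteq> {a + b | a b. a \<in> supp f \<and> b \<in> supp g}"
proof
  fix m
  assume "m \<in> supp (hmult f g)"
  then have "hmult f g m \<noteq> 0"
    by (simp add: supp_def)
  then have "{(a, b). a \<in> supp f \<and> b \<in> supp g \<and> a + b = m} \<noteq> {}"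
    unfolding hmult_def by (rule contrapos_nn) (simp only: sum.empty)
  then show "m \<in> {a + b | a b. a \<in> supp f \<and> b \<in> supp g}"
    by blast
qed

lemma supp_hpow: "supp (hpow f n) \<subseteq> {sum_mset M | M. size M = n \<and> set_mset M \<subseteq> supp f}"
proof (induction n)
  case 0
  show ?case
    by (auto simp: supp_def hone_def intro: exI[of _ "{#}"])
next
  case (Suc n)
  show ?case
  proof
    fix m
    assume "m \<in> supp (hpow f (Suc n))"
    then obtain a b where "a \<in> supp f" "b \<in> supp (hpow f n)" "m = a + b"
      using supp_hmult by fastforce
    moreover from this(2) Suc.IH obtain M where "size M = n" "set_mset M \<subseteq> supp f" "b = sum_mset M"
      by blast
    ultimately show "m \<in> {sum_mset M | M. size M = Suc n \<and> set_mset M \<subseteq> supp f}"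
      by (intro CollectI exI[of _ "add_mset a M"]) simp
  qed
qed

lemma hmult_hone: "hmult f hone = f"
proof
  fix m
  have "{(a, b). a \<in> supp f \<and> b \<in> supp (hone :: 'a \<Rightarrow> 'b) \<and> a + b = m}
      = (if m \<in> supp f then {(m, 0)} else {})"
    by (auto simp: supp_def hone_def)
  then show "hmult f hone m = f m"
    by (simp add: hmult_def hone_def supp_def)
qed

(* If infinitely many powers contribute to m, both sides are 0 by the convention of hsum. *)
lemma hlog1p_eq_sum:
  "hlog1p eps m = (\<Sum>j | 1 \<le> j \<and> hpow eps j m \<noteq> 0. (-1) ^ (j - 1) * hpow eps j m / of_nat j)"
proof -
  have "{j \<in> {1..}. (-1) ^ (j - 1) * hpow eps j m / of_nat j \<noteq> 0} = {j. 1 \<le> j \<and> hpow eps j m \<noteq> 0}"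
    by auto
  then show ?thesis
    unfolding hlog1p_def hsum_def by simp
qed

lemma supp_hlog1p: "supp (hlog1p eps) \<subseteq> finite_sums (supp eps)"
proof
  fix m
  assume "m \<in> supp (hlog1p eps)"
  then have "{j. 1 \<le> j \<and> hpow eps j m \<noteq> 0} \<noteq> {}"
    unfolding supp_def hlog1p_eq_sum by force
  then obtain j where "1 \<le> j" "m \<in> supp (hpow eps j)"
    unfolding supp_def by blast
  then obtain M where "size M = j" "set_mset M \<subseteq> supp eps" "m = sum_mset M"
    using supp_hpow by blast
  with \<open>1 \<le> j\<close> show "m \<in> finite_sums (supp eps)"
    by (auto intro: finite_sumsI)
qed

lemma finite_hpow_nonzero:
  assumes "infinitesimal eps"
  shows "finite {j. hpow eps j m \<noteq> 0}"
proof -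
  have "{j. hpow eps j m \<noteq> 0} \<subseteq> size ` {M. set_mset M \<subseteq> supp eps \<and> sum_mset M = m}"
  proof
    fix j
    assume "j \<in> {j. hpow eps j m \<noteq> 0}"
    then have "m \<in> supp (hpow eps j)"
      by (simp add: supp_def)
    then obtain M where "size M = j" "set_mset M \<subseteq> supp eps" "m = sum_mset M"
      using supp_hpow by blast
    then show "j \<in> size ` {M. set_mset M \<subseteq> supp eps \<and> sum_mset M = m}"
      by auto
  qed
  moreover have "finite {M. set_mset M \<subseteq> supp eps \<and> sum_mset M = m}"
    using assms unfolding infinitesimal_def hahn_def
    by (intro finite_sum_representations) auto
  ultimately show ?thesis
    using finite_surj by blast
qed

lemma hpow_nonzero_if_hlog1p_cancels:
  assumes "infinitesimal eps" and "eps m \<noteq> 0" and "hlog1p eps m = 0"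
  obtains j where "2 \<le> j" and "hpow eps j m \<noteq> 0"
proof -
  define c where "c j = (-1) ^ (j - 1) * hpow eps j m / of_nat j" for j
  define J where "J = {j. 1 \<le> j \<and> hpow eps j m \<noteq> 0}"
  have "finite J"
    unfolding J_def using finite_hpow_nonzero[OF assms(1)] by (rule rev_finite_subset) auto
  moreover have "1 \<in> J"
    using assms(2) by (simp add: J_def hmult_hone)
  ultimately have "hlog1p eps m = c 1 + (\<Sum>j\<in>J - {1}. c j)"
    unfolding hlog1p_eq_sum J_def[symmetric] c_def[symmetric] by (rule sum.remove)
  moreover have "c 1 = eps m"
    by (simp add: c_def hmult_hone)
  ultimately obtain j where "j \<in> J - {1}" "c j \<noteq> 0"
    using assms(2,3) sum.not_neutral_contains_not_neutral by force
  then show thesis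
    by (intro that[of j]) (auto simp: J_def)
qed

lemma supp_subset_finite_sums_supp_hlog1p:
  fixes eps :: "'m::linordered_ab_group_add \<Rightarrow> 'k::field_char_0"
  assumes "infinitesimal eps"
  shows "supp eps \<subseteq> finite_sums (supp (hlog1p eps))"
proof
  fix m
  assume "m \<in> supp eps"
  have wf: "wfp_on (supp eps) (>)"
    using assms by (simp add: infinitesimal_def hahn_def well_based_iff_wfp_on)
  have neg: "supp eps \<subseteq> {..<0}"
    using assms by (auto simp: infinitesimal_def)
  from wf show "m \<in> finite_sums (supp (hlog1p eps))"
  proof (induction rule: wfp_on_induct)
    case in_set
    show ?case by fact
  next
    case (less m)
    show ?case
    proof (cases "hlog1p eps m = 0")
      case False
      then have "m \<in> supp (hlog1p eps)"
        by (simp add: supp_def)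
      then show ?thesis
        by (rule subsetD[OF subset_finite_sums])
    next
      case True
      have "eps m \<noteq> 0"
        using less.hyps by (simp add: supp_def)
      then obtain j where "2 \<le> j" "m \<in> supp (hpow eps j)"
        using hpow_nonzero_if_hlog1p_cancels[OF assms _ True] by (auto simp: supp_def)
      then obtain M where M: "size M = j" "set_mset M \<subseteq> supp eps" "m = sum_mset M"
        using supp_hpow by blast
      have "a \<in> finite_sums (supp (hlog1p eps))" if "a \<in># M" for a
      proof (rule less.IH)
        show "a \<in> supp eps"
          using M(2) that by blast
        show "m < a"
          unfolding M(3) using that M neg \<open>2 \<le> j\<close> by (intro sum_mset_less_member) auto
      qed
      moreover have "M \<noteq> {#}"
        using M(1) \<open>2 \<le> j\<close> by auto
      ultimately show ?thesis
        unfolding M(3) by (intro sum_mset_in_finite_sums) auto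
    qed
  qed
qed

lemma finite_sums_locally_finite:
  fixes S :: "'i \<Rightarrow> 'm::linordered_ab_group_add set"
  assumes wb: "well_based (\<Union>i\<in>I. S i)" and neg: "(\<Union>i\<in>I. S i) \<subseteq> {..<0}"
    and fin: "\<And>a. finite {i \<in> I. a \<in> S i}"
  shows "finite {i \<in> I. m \<in> finite_sums (S i)}"
proof -
  define U where "U = (\<Union>i\<in>I. S i)"
  \<comment> \<open>Only the finitely many elements occurring in a representation of m can matter.\<close>
  define A where "A = (\<Union>M\<in>{M. set_mset M \<subseteq> U \<and> sum_mset M = m}. set_mset M)"
  have "finite A"
    unfolding A_def U_def using finite_sum_representations[OF wb neg] by auto
  have "{i \<in> I. m \<in> finite_sums (S i)} \<subseteq> (\<Union>a\<in>A. {i \<in> I. a \<in> S i})"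
  proof
    fix i
    assume i: "i \<in> {i \<in> I. m \<in> finite_sums (S i)}"
    then obtain M where M: "M \<noteq> {#}" "set_mset M \<subseteq> S i" "m = sum_mset M"
      by (blast elim: finite_sumsE)
    then obtain a where "a \<in># M"
      by blast
    have "set_mset M \<subseteq> U"
      using M(2) i by (auto simp: U_def)
    with M(3) \<open>a \<in># M\<close> have "a \<in> A"
      unfolding A_def by blast
    moreover have "a \<in> S i"
      using M(2) \<open>a \<in># M\<close> by blast
    ultimately show "i \<in> (\<Union>a\<in>A. {i \<in> I. a \<in> S i})"
      using i by blast
  qed
  moreover have "finite (\<Union>a\<in>A. {i \<in> I. a \<in> S i})"
    using \<open>finite A\<close> fin by (rule finite_UN_I)
  ultimately show ?thesis
    by (rule finite_subset)
qed

lemma hsummable_if_supp_subset_finite_sums: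
  fixes F G :: "'i \<Rightarrow> 'm::linordered_ab_group_add \<Rightarrow> 'k::zero"
  assumes "hsummable I F"
    and neg: "\<And>i. i \<in> I \<Longrightarrow> supp (F i) \<subseteq> {..<0}"
    and supp_G: "\<And>i. i \<in> I \<Longrightarrow> supp (G i) \<subseteq> finite_sums (supp (F i))"
  shows "hsummable I G"
proof -
  define U where "U = (\<Union>i\<in>I. supp (F i))"
  have wb: "well_based U" and fin: "\<And>a. finite {i \<in> I. a \<in> supp (F i)}"
    using assms(1) by (simp_all add: hsummable_def U_def)
  have U_neg: "U \<subseteq> {..<0}"
    using neg by (auto simp: U_def)
  have "supp (G i) \<subseteq> finite_sums U" if "i \<in> I" for i
  proof -
    have "supp (F i) \<subseteq> U"
      using that by (auto simp: U_def)
    then show ?thesis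
      using supp_G[OF that] finite_sums_mono by blast
  qed
  then have "well_based (\<Union>i\<in>I. supp (G i))"
    by (intro well_based_subset[OF well_based_finite_sums[OF wb U_neg]]) blast
  moreover have "finite {i \<in> I. m \<in> supp (G i)}" for m
  proof (rule finite_subset)
    show "{i \<in> I. m \<in> supp (G i)} \<subseteq> {i \<in> I. m \<in> finite_sums (supp (F i))}"
      using supp_G by blast
    show "finite {i \<in> I. m \<in> finite_sums (supp (F i))}"
      using wb U_neg fin unfolding U_def by (rule finite_sums_locally_finite)
  qed
  ultimately show ?thesis
    by (simp add: hsummable_def)
qed

theorem corollary2p6:
  fixes I :: "'i set"
    and eps :: "'i \<Rightarrow> 'm::linordered_ab_group_add \<Rightarrow> 'k::field_char_0"
  assumes "\<forall>i\<in>I. infinitesimal (eps i)"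
  shows "hsummable I eps \<longleftrightarrow> hsummable I (\<lambda>i. hlog1p (eps i))"
proof
  have neg: "supp (eps i) \<subseteq> {..<0}" if "i \<in> I" for i
    using assms that by (auto simp: infinitesimal_def)
  show "hsummable I (\<lambda>i. hlog1p (eps i))" if "hsummable I eps"
    using that by (rule hsummable_if_supp_subset_finite_sums) (simp_all add: neg supp_hlog1p)
  show "hsummable I eps" if "hsummable I (\<lambda>i. hlog1p (eps i))"
    using that
  proof (rule hsummable_if_supp_subset_finite_sums)
    show "supp (hlog1p (eps i)) \<subseteq> {..<0}" if "i \<in> I" for i
      using supp_hlog1p finite_sums_neg[OF neg[OF that]] by (rule order.trans)
    show "supp (eps i) \<subseteq> finite_sums (supp (hlog1p (eps i)))" if "i \<in> I" for i
      using assms that by (simp add: supp_subset_finite_sums_supp_hlog1p)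
  qed
qed

end
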